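(* Let $L_5=\{-3,-2,-1,0,1\}$ with its natural linear order. Define the games $\star=\{-1\mid -3\}$, and for any game $G$: $\mathsf{M}(G)=\{1\mid G\}$, $\mathsf{P}(G)=\{G\mid -2\}$, $\mathsf{P}_\star(G)=\{G\mid \star\}$. For $n\in\mathbb{N}$ let $\mathsf{P}_n(G)=\mathsf{P}(G)$ if $n$ is odd and $\mathsf{P}_n(G)=\mathsf{P}_\star(G)$ if $n$ is even. Define $G_0=0$ (the atomic game $[0]$) and $G_{n+1}=\mathsf{M}(\mathsf{P}_n(G_n))$. Then for every $n\ge 0$, $G_{n+1}\not\le G_n$.
   Context: Games over a poset $A$ of atoms are defined inductively: for each $a\in A$, $[a]$ is a game (atomic; often written simply $a$); whenever $L,R$ are non-empty sets of games, $\{L\mid R\}$ is a game (composite), with left options the elements of $L$ and right options the elements of $R$; $\{G_1,\dots,G_n\mid H_1,\dots,H_m\}$ denotes $\{\{G_1,\dots,G_n\}\mid\{H_1,\dots,H_m\}\}$. Relations $\le$ and $\lhd$ on games are defined by mutual recursion: $G\le H$ iff (1) every left option $G^L$ of $G$ satisfies $G^L\lhd H$, (2) every right option $H^R$ of $H$ satisfies $G\lhd H^R$, and (3) if $G$ or $H$ is atomic then $G\lhd H$. $G\lhd H$ iff (1) some right option $G^R$ of $G$ satisfies $G^R\le H$, or (2) some left option $H^L$ of $H$ satisfies $G\le H^L$, or (3) $G=[a]$, $H=[b]$ are atomic with $a\le b$ in $A$. *)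

theory Defs
  imports Main
begin

text \<open>Finite games over a poset of atoms. A composite game carries its
(finite, non-empty) lists of left and right options; only the sets of
options matter for the relations below.\<close>

datatype 'a game = Atom 'a | Comp "'a game list" "'a game list"

fun lopts :: "'a game \<Rightarrow> 'a game list" where
  "lopts (Atom a) = []"
| "lopts (Comp L R) = L"

fun ropts :: "'a game \<Rightarrow> 'a game list" where
  "ropts (Atom a) = []"
| "ropts (Comp L R) = R"

fun is_atom :: "'a game \<Rightarrow> bool" where
  "is_atom (Atom a) = True"
| "is_atom (Comp L R) = False"

fun atom_le :: "'a::order game \<Rightarrow> 'a game \<Rightarrow> bool" where
  "atom_le (Atom a) (Atom b) = (a \<le> b)"
| "atom_le _ _ = False"

lemma size_mem_list: "x \<in> set xs \<Longrightarrow> size x \<le> size_list size xs"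
  by (induction xs) auto

lemma size_lopts: "x \<in> set (lopts G) \<Longrightarrow> size x < size G"
  by (cases G) (auto dest: size_mem_list)

lemma size_ropts: "x \<in> set (ropts G) \<Longrightarrow> size x < size G"
  by (cases G) (auto dest: size_mem_list)

function (sequential) game_le :: "'a::order game \<Rightarrow> 'a game \<Rightarrow> bool"
  and game_lf :: "'a::order game \<Rightarrow> 'a game \<Rightarrow> bool" where
  "game_le G H =
     ((\<forall>GL\<in>set (lopts G). game_lf GL H) \<and>
      (\<forall>HR\<in>set (ropts H). game_lf G HR) \<and>
      ((is_atom G \<or> is_atom H) \<longrightarrow> game_lf G H))"
| "game_lf G H =
     ((\<exists>GR\<in>set (ropts G). game_le GR H) \<or>
      (\<exists>HL\<in>set (lopts H). game_le G HL) \<or>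
      atom_le G H)"
  by pat_completeness auto
termination
  by (relation "measures [\<lambda>x. case x of Inl (g,h) \<Rightarrow> size g + size h | Inr (g,h) \<Rightarrow> size g + size h,
                          \<lambda>x. case x of Inl _ \<Rightarrow> 1 | Inr _ \<Rightarrow> 0]")
     (auto dest: size_lopts size_ropts)

text \<open>The atoms are taken from int; all games below only use atoms from
L5 = {-3,-2,-1,0,1}, on which the order of int is the natural linear order.\<close>

definition star_game :: "int game" where
  "star_game = Comp [Atom (-1)] [Atom (-3)]"

definition M_game :: "int game \<Rightarrow> int game" where
  "M_game G = Comp [Atom 1] [G]"

definition P_game :: "int game \<Rightarrow> int game" where
  "P_game G = Comp [G] [Atom (-2)]"

definition Pstar_game :: "int game \<Rightarrow> int game" where
  "Pstar_game G = Comp [G] [star_game]"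

definition Pn_game :: "nat \<Rightarrow> int game \<Rightarrow> int game" where
  "Pn_game n G = (if odd n then P_game G else Pstar_game G)"

fun Gseq :: "nat \<Rightarrow> int game" where
  "Gseq 0 = Atom 0"
| "Gseq (Suc n) = M_game (Pn_game n (Gseq n))"

end

theory Submission
  imports Defs
begin

text \<open>Write P m (Pseq m below) for \<open>P\<^sub>m(G\<^sub>m)\<close>, so that G (m+1) = {1 | P m}
and P m = {G m | X m} with X m (Pn_ropt m below) equal to -2 or \<open>\<star>\<close> according to the parity of m.
One shows simultaneously by induction on m that neither G m \<le> G k nor
P m \<le> P k holds for k < m. Unfolding the definitions, G (m+1) \<le> G (k+1) amounts
to G (m+1) \<lhd> P k, i.e. to P m \<le> P k or G (m+1) \<le> G k, both excluded for k < m.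
Likewise P (m+1) \<le> P k needs both G (m+1) \<lhd> P k, which settles k < m, and
P (m+1) \<lhd> X k, which fails for k = m: X (m+1) and X m are the two different games
-2 and \<open>\<star>\<close>, and no G j satisfies G j \<lhd> -1.\<close>

declare game_le.simps[simp del] game_lf.simps[simp del]

lemma game_le_Comp_Comp [simp]:
  "game_le (Comp L R) (Comp L' R') \<longleftrightarrow>
     (\<forall>x\<in>set L. game_lf x (Comp L' R')) \<and> (\<forall>y\<in>set R'. game_lf (Comp L R) y)"
  by (simp add: game_le.simps)

lemma game_le_Comp_Atom [simp]:
  "game_le (Comp L R) (Atom b) \<longleftrightarrow>
     (\<forall>x\<in>set L. game_lf x (Atom b)) \<and> game_lf (Comp L R) (Atom b)"
  by (simp add: game_le.simps)

lemma game_le_Atom_Comp [simp]: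
  "game_le (Atom a) (Comp L' R') \<longleftrightarrow>
     (\<forall>y\<in>set R'. game_lf (Atom a) y) \<and> game_lf (Atom a) (Comp L' R')"
  by (simp add: game_le.simps)

lemma game_le_Atom_Atom [simp]: "game_le (Atom a) (Atom b) \<longleftrightarrow> game_lf (Atom a) (Atom b)"
  by (simp add: game_le.simps)

lemma game_lf_Comp_Comp [simp]:
  "game_lf (Comp L R) (Comp L' R') \<longleftrightarrow>
     (\<exists>x\<in>set R. game_le x (Comp L' R')) \<or> (\<exists>y\<in>set L'. game_le (Comp L R) y)"
  by (simp add: game_lf.simps)

lemma game_lf_Comp_Atom [simp]: "game_lf (Comp L R) (Atom b) \<longleftrightarrow> (\<exists>x\<in>set R. game_le x (Atom b))"
  by (simp add: game_lf.simps)

lemma game_lf_Atom_Comp [simp]: "game_lf (Atom a) (Comp L' R') \<longleftrightarrow> (\<exists>y\<in>set L'. game_le (Atom a) y)"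
  by (simp add: game_lf.simps)

lemma game_lf_Atom_Atom [simp]: "game_lf (Atom a) (Atom b) \<longleftrightarrow> a \<le> b"
  by (simp add: game_lf.simps)

definition Pn_ropt :: "nat \<Rightarrow> int game" where
  "Pn_ropt n = (if odd n then Atom (-2) else star_game)"

definition Pseq :: "nat \<Rightarrow> int game" where
  "Pseq n = Pn_game n (Gseq n)"

lemma Pseq_eq: "Pseq n = Comp [Gseq n] [Pn_ropt n]"
  by (simp add: Pseq_def Pn_game_def Pn_ropt_def P_game_def Pstar_game_def)

lemma Gseq_Suc_eq: "Gseq (Suc n) = Comp [Atom 1] [Pseq n]"
  by (simp add: Pseq_def M_game_def)

declare Gseq.simps(2)[simp del]

lemma Gseq_not_lf_neg1: "\<not> game_lf (Gseq n) (Atom (-1))"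
  by (induction n) (simp_all add: Gseq_Suc_eq Pseq_eq)

lemma Pseq_not_lf_Pn_ropt:
  assumes "odd m \<noteq> odd k"
  shows "\<not> game_lf (Pseq m) (Pn_ropt k)"
  using assms Gseq_not_lf_neg1[of m]
  by (auto simp: Pseq_eq Pn_ropt_def star_game_def)

lemma Gseq_Suc_not_le_Gseq_0: "\<not> game_le (Gseq (Suc m)) (Gseq 0)"
  by (simp add: Gseq_Suc_eq)

lemma Gseq_Suc_le_Gseq_Suc_iff:
  "game_le (Gseq (Suc m)) (Gseq (Suc k)) \<longleftrightarrow> game_lf (Gseq (Suc m)) (Pseq k)"
  by (simp add: Gseq_Suc_eq[of k] Gseq_Suc_eq[of m])

lemma Gseq_Suc_lf_Pseq_iff:
  "game_lf (Gseq (Suc m)) (Pseq k) \<longleftrightarrow>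
     game_le (Pseq m) (Pseq k) \<or> game_le (Gseq (Suc m)) (Gseq k)"
  by (simp add: Gseq_Suc_eq[of m] Pseq_eq[of k])

lemma Pseq_Suc_le_Pseq_iff:
  "game_le (Pseq (Suc m)) (Pseq k) \<longleftrightarrow>
     game_lf (Gseq (Suc m)) (Pseq k) \<and> game_lf (Pseq (Suc m)) (Pn_ropt k)"
  by (simp add: Pseq_eq[of "Suc m"] Pseq_eq[of k])

lemma Gseq_Pseq_not_le_earlier:
  "k < m \<Longrightarrow> \<not> game_le (Gseq m) (Gseq k) \<and> \<not> game_le (Pseq m) (Pseq k)"
proof (induction m arbitrary: k)
  case 0
  then show ?case by simp
next
  case (Suc m)
  note IH = Suc.IH
  have G_not_le: "\<not> game_le (Gseq (Suc m)) (Gseq k)" if "k \<le> m" for k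
    using that
  proof (induction k)
    case 0
    show ?case by (rule Gseq_Suc_not_le_Gseq_0)
  next
    case (Suc k)
    then show ?case
      using IH[of k] by (simp add: Gseq_Suc_le_Gseq_Suc_iff Gseq_Suc_lf_Pseq_iff)
  qed
  have G_not_lf: "\<not> game_lf (Gseq (Suc m)) (Pseq k)" if "k < m" for k
    using that IH[of k] G_not_le[of k] by (simp add: Gseq_Suc_lf_Pseq_iff)
  have "\<not> game_le (Pseq (Suc m)) (Pseq k)"
  proof (cases "k = m")
    case True
    then show ?thesis using Pseq_not_lf_Pn_ropt[of "Suc m" m] by (simp add: Pseq_Suc_le_Pseq_iff)
  next
    case False
    then show ?thesis using Suc.prems G_not_lf[of k] by (simp add: Pseq_Suc_le_Pseq_iff)
  qed
  then show ?case using Suc.prems G_not_le[of k] by simp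
qed

theorem lemma3p4:
  fixes n :: nat
  shows "\<not> game_le (Gseq (Suc n)) (Gseq n)"
  using Gseq_Pseq_not_le_earlier[of n "Suc n"] by simp

end
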